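(* Let $(X,d_X)$ and $(\Lambda,d_\Lambda)$ be complete metric spaces and, for each $\lambda\in\Lambda$, let $S_\lambda(\cdot,\cdot)$ be a process on $X$. Assume that for every $s\in\mathbb R$ and $t\ge s$ the map $\lambda\mapsto S_\lambda(t,s)x$ is continuous, uniformly for $x$ in compact subsets of $X$. Let $K\subseteq X$ be compact. Then for any $s\in\mathbb R$ and $t\ge s$ the map $(\lambda,B)\mapsto S_\lambda(t,s)B$ is jointly continuous on $\Lambda\times CB(K)$, where the images are equipped with the Hausdorff distance $\Delta_X$.
   Context: A process on $X$ is a family of maps $S(t,s):X\to X$, $s\in\mathbb R$, $t\ge s$, with $S(t,t)=\mathrm{id}$, $S(t,\tau)S(\tau,s)=S(t,s)$ for $t\ge\tau\ge s$, and $S(t,s)x$ continuous in $(x,t,s)$. $\rho_X(A,C)=\sup_{a\in A}\inf_{c\in C}d_X(a,c)$, $\Delta_X(A,C)=\max(\rho_X(A,C),\rho_X(C,A))$. $CB(K)$ is the set of nonempty closed (hence compact) subsets of $K$ with metric $\Delta_X$. *)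

theory Defs
  imports "HOL-Analysis.Analysis"
begin

definition process :: "(real \<Rightarrow> real \<Rightarrow> 'a::metric_space \<Rightarrow> 'a) \<Rightarrow> bool" where
  "process S \<longleftrightarrow>
     (\<forall>t x. S t t x = x) \<and>
     (\<forall>t \<tau> s x. s \<le> \<tau> \<and> \<tau> \<le> t \<longrightarrow> S t \<tau> (S \<tau> s x) = S t s x) \<and>
     continuous_on {(x, t, s). s \<le> t} (\<lambda>(x, t, s). S t s x)"

definition hrho :: "'a::metric_space set \<Rightarrow> 'a set \<Rightarrow> real" where
  "hrho A C = (SUP a\<in>A. INF c\<in>C. dist a c)"

definition hDelta :: "'a::metric_space set \<Rightarrow> 'a set \<Rightarrow> real" where
  "hDelta A C = max (hrho A C) (hrho C A)"

definition CB :: "'a::metric_space set \<Rightarrow> 'a set set" where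
  "CB K = {B. B \<subseteq> K \<and> B \<noteq> {} \<and> closed B}"

end

theory Submission
  imports Defs
begin

text \<open>The limit map g = S l0 t s is uniformly continuous on the compact set K,
  say with modulus \<eta> for \<epsilon>/4, and S l t s is uniformly \<epsilon>/4-close to g on K for l near l0.
  If B is \<eta>-close to B0 in the Hausdorff distance, every point of B has a partner in B0 at distance
  less than \<eta> and vice versa, so by the triangle inequality the images of partners are less than
  \<epsilon>/2 apart, and both Hausdorff semi-distances of the images are at most \<epsilon>/2.\<close>

lemma hrho_less_imp_near:
  fixes A C :: "'a::metric_space set"
  assumes "bounded (A \<union> C)" "C \<noteq> {}" "hrho A C < e" "a \<in> A"
  shows "\<exists>c\<in>C. dist a c < e"
proof -
  obtain M where M: "\<forall>x\<in>A \<union> C. \<forall>y\<in>A \<union> C. dist x y \<le> M"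
    using bounded_two_points assms(1) by blast
  obtain c0 where c0: "c0 \<in> C" using assms(2) by blast
  have bdd_below: "bdd_below ((\<lambda>c. dist x c) ` C)" for x
    by (rule bdd_belowI[of _ 0]) auto
  have "(INF c\<in>C. dist x c) \<le> M" if "x \<in> A" for x
    using order_trans[OF cINF_lower[OF bdd_below c0]] M that c0 by blast
  then have "bdd_above ((\<lambda>x. INF c\<in>C. dist x c) ` A)"
    by (intro bdd_aboveI[of _ M]) auto
  then have "(INF c\<in>C. dist a c) \<le> hrho A C"
    unfolding hrho_def by (rule cSUP_upper[OF assms(4)])
  with assms(3) have "(INF c\<in>C. dist a c) < e" by linarith
  then show ?thesis using cINF_less_iff[OF assms(2) bdd_below] by auto
qed

lemma hrho_le_if_near:
  fixes A C :: "'a::metric_space set"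
  assumes "A \<noteq> {}" "\<forall>a\<in>A. \<exists>c\<in>C. dist a c < e"
  shows "hrho A C \<le> e"
  unfolding hrho_def
proof (rule cSUP_least[OF assms(1)])
  fix a assume "a \<in> A"
  then obtain c where c: "c \<in> C" "dist a c < e" using assms(2) by blast
  have "bdd_below ((\<lambda>c. dist a c) ` C)"
    by (rule bdd_belowI[of _ 0]) auto
  then have "(INF c\<in>C. dist a c) \<le> dist a c" by (rule cINF_lower[OF _ c(1)])
  with c(2) show "(INF c\<in>C. dist a c) \<le> e" by linarith
qed

lemma hrho_image_le:
  fixes A C :: "'a::metric_space set" and f g :: "'a \<Rightarrow> 'b::metric_space"
  assumes "A \<noteq> {}" "C \<noteq> {}" "bounded (A \<union> C)" "hrho A C < \<eta>"
    and near: "\<And>a c. a \<in> A \<Longrightarrow> c \<in> C \<Longrightarrow> dist a c < \<eta> \<Longrightarrow> dist (f a) (g c) < e"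
  shows "hrho (f ` A) (g ` C) \<le> e"
proof (rule hrho_le_if_near)
  show "f ` A \<noteq> {}" using assms(1) by simp
  show "\<forall>y\<in>f ` A. \<exists>z\<in>g ` C. dist y z < e"
  proof
    fix y assume "y \<in> f ` A"
    then obtain a where a: "a \<in> A" "y = f a" by blast
    then obtain c where "c \<in> C" "dist a c < \<eta>"
      using hrho_less_imp_near[OF assms(3,2,4)] by blast
    with a near show "\<exists>z\<in>g ` C. dist y z < e" by blast
  qed
qed

lemma process_continuous_on_section:
  assumes "process S" "s \<le> t"
  shows "continuous_on U (S t s)"
proof -
  have "continuous_on {(x, t, s). s \<le> t} (\<lambda>(x, t, s). S t s x)"
    using assms(1) unfolding process_def by blast
  moreover have "continuous_on U (\<lambda>x. (x, t, s))" by (intro continuous_intros)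
  moreover have "(\<lambda>x. (x, t, s)) ` U \<subseteq> {(x, t, s). s \<le> t}" using assms(2) by auto
  ultimately show ?thesis
    using continuous_on_compose2[of _ "\<lambda>(x, t, s). S t s x" U "\<lambda>x. (x, t, s)"] by simp
qed

lemma hDelta_image_continuous:
  fixes g :: "'a::metric_space \<Rightarrow> 'b::metric_space"
  assumes K: "compact K" and g: "continuous_on K g" and B0: "B0 \<in> CB K" and "\<epsilon> > 0"
  shows "\<exists>\<delta>>0. \<forall>f B. B \<in> CB K \<and> (\<forall>x\<in>K. dist (f x) (g x) < \<delta>) \<and> hDelta B B0 < \<delta> \<longrightarrow>
           hDelta (f ` B) (g ` B0) < \<epsilon>"
proof -
  have "uniformly_continuous_on K g" using K g compact_uniformly_continuous by blast
  then obtain \<eta> where \<eta>: "\<eta> > 0"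
    and g_unif: "\<forall>x\<in>K. \<forall>y\<in>K. dist y x < \<eta> \<longrightarrow> dist (g y) (g x) < \<epsilon>/4"
    unfolding uniformly_continuous_on_def using \<open>\<epsilon> > 0\<close> by (metis divide_pos_pos zero_less_numeral)
  have "\<forall>f B. B \<in> CB K \<and> (\<forall>x\<in>K. dist (f x) (g x) < min (\<epsilon>/4) \<eta>) \<and> hDelta B B0 < min (\<epsilon>/4) \<eta>
          \<longrightarrow> hDelta (f ` B) (g ` B0) < \<epsilon>"
  proof (intro allI impI, elim conjE)
    fix f B
    assume B: "B \<in> CB K" and fg: "\<forall>x\<in>K. dist (f x) (g x) < min (\<epsilon>/4) \<eta>"
      and BB0: "hDelta B B0 < min (\<epsilon>/4) \<eta>"
    have sub: "B \<subseteq> K" "B0 \<subseteq> K" and ne: "B \<noteq> {}" "B0 \<noteq> {}"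
      using B B0 unfolding CB_def by auto
    then have bdd: "bounded (B \<union> B0)" "bounded (B0 \<union> B)"
      using K compact_imp_bounded bounded_subset by (metis Un_subset_iff)+
    have "hrho (f ` B) (g ` B0) \<le> \<epsilon>/2"
    proof (rule hrho_image_le[OF ne bdd(1)])
      show "hrho B B0 < \<eta>" using BB0 unfolding hDelta_def by simp
      fix b c assume "b \<in> B" "c \<in> B0" "dist b c < \<eta>"
      with sub have "b \<in> K" "c \<in> K" by auto
      with fg g_unif \<open>dist b c < \<eta>\<close>
      have "dist (f b) (g b) < \<epsilon>/4" "dist (g b) (g c) < \<epsilon>/4"
        by (auto simp: dist_commute)
      then show "dist (f b) (g c) < \<epsilon>/2" using dist_triangle[of "f b" "g c" "g b"] by linarith
    qed
    moreover have "hrho (g ` B0) (f ` B) \<le> \<epsilon>/2"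
    proof (rule hrho_image_le[OF ne(2,1) bdd(2)])
      show "hrho B0 B < \<eta>" using BB0 unfolding hDelta_def by simp
      fix b c assume "b \<in> B0" "c \<in> B" "dist b c < \<eta>"
      with sub have "b \<in> K" "c \<in> K" by auto
      with fg g_unif \<open>dist b c < \<eta>\<close>
      have "dist (g b) (g c) < \<epsilon>/4" "dist (g c) (f c) < \<epsilon>/4"
        by (auto simp: dist_commute)
      then show "dist (g b) (f c) < \<epsilon>/2" using dist_triangle[of "g b" "f c" "g c"] by linarith
    qed
    ultimately show "hDelta (f ` B) (g ` B0) < \<epsilon>"
      unfolding hDelta_def using \<open>\<epsilon> > 0\<close> by linarith
  qed
  then show ?thesis using \<open>\<epsilon> > 0\<close> \<eta> by (intro exI[of _ "min (\<epsilon>/4) \<eta>"]) auto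
qed

theorem lemma3p2:
  fixes S :: "'l::complete_space \<Rightarrow> real \<Rightarrow> real \<Rightarrow> 'a::complete_space \<Rightarrow> 'a"
    and K :: "'a set"
  assumes proc: "\<And>l. process (S l)"
    and unif: "\<And>s t C l0 \<epsilon>. s \<le> t \<Longrightarrow> compact C \<Longrightarrow> \<epsilon> > 0 \<Longrightarrow>
                 \<exists>\<delta>>0. \<forall>l. dist l l0 < \<delta> \<longrightarrow>
                        (\<forall>x\<in>C. dist (S l t s x) (S l0 t s x) < \<epsilon>)"
    and K: "compact K"
  shows "\<forall>s t. s \<le> t \<longrightarrow>
           (\<forall>l0 B0 \<epsilon>. B0 \<in> CB K \<and> \<epsilon> > 0 \<longrightarrow>
              (\<exists>\<delta>>0. \<forall>l B. B \<in> CB K \<and> dist l l0 < \<delta> \<and> hDelta B B0 < \<delta> \<longrightarrow>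
                  hDelta (S l t s ` B) (S l0 t s ` B0) < \<epsilon>))"
proof (intro allI impI, elim conjE)
  fix s t :: real and l0 B0 and \<epsilon> :: real
  assume st: "s \<le> t" and B0: "B0 \<in> CB K" and "\<epsilon> > 0"
  obtain \<delta> where "\<delta> > 0" and image_close:
    "\<forall>f B. B \<in> CB K \<and> (\<forall>x\<in>K. dist (f x) (S l0 t s x) < \<delta>) \<and> hDelta B B0 < \<delta> \<longrightarrow>
       hDelta (f ` B) (S l0 t s ` B0) < \<epsilon>"
    using hDelta_image_continuous[OF K process_continuous_on_section[OF proc st] B0 \<open>\<epsilon> > 0\<close>]
    by blast
  obtain \<delta>' where "\<delta>' > 0"
    and map_close: "\<forall>l. dist l l0 < \<delta>' \<longrightarrow> (\<forall>x\<in>K. dist (S l t s x) (S l0 t s x) < \<delta>)"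
    using unif[OF st K \<open>\<delta> > 0\<close>] by blast
  show "\<exists>\<delta>>0. \<forall>l B. B \<in> CB K \<and> dist l l0 < \<delta> \<and> hDelta B B0 < \<delta> \<longrightarrow>
          hDelta (S l t s ` B) (S l0 t s ` B0) < \<epsilon>"
    using \<open>\<delta> > 0\<close> \<open>\<delta>' > 0\<close> image_close map_close
    by (intro exI[of _ "min \<delta> \<delta>'"]) auto
qed

end
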